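(* Let $0<\rho<0.1$ and define $$\phi(x)=\frac{\rho}{1-\rho^2}\|x\|\,e^{-\frac{(1.1\rho\|x\|)^2}{1-\rho^2}-\frac{1.1\rho}{1-\rho^2}\|x\|},\qquad x\in\mathbb{R}^2.$$ Let $\tilde f,\tilde g\colon\mathbb{R}^2\to\Delta_3$ be measurable. Then $$\sum_{d\ge2}\rho^d\sum_{\substack{k\in\mathbb{N}^2\\ \|k\|_1=d}}\Big|\Big\langle\int_{\mathbb{R}^2}\sqrt{k!}h_k(x)\tilde f(x)\gamma_2(x)\,dx,\int_{\mathbb{R}^2}\sqrt{k!}h_k(y)\tilde g(y)\gamma_2(y)\,dy\Big\rangle\Big|\le(5\rho+8\rho^2)\cdot\frac12\Big(\int_{\mathbb{R}^2}\phi\|\tilde f\|^2\gamma_2\,dx+\int_{\mathbb{R}^2}\phi\|\tilde g\|^2\gamma_2\,dx\Big).$$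
   Context: $\Delta_3=\{x\in\mathbb{R}^3:\sum_ix_i=1,x_i\ge0\}$; $\gamma_2$ is the standard Gaussian density on $\mathbb{R}^2$; integrals of $\mathbb{R}^3$-valued functions are taken coordinatewise and $\langle\cdot,\cdot\rangle$, $\|\cdot\|$ are Euclidean. Hermite polynomials: $h_m(t)=\sum_{j=0}^{\lfloor m/2\rfloor}\frac{t^{m-2j}(-1)^j2^{-j}}{j!(m-2j)!}$ for integers $m\ge0$; for $k=(k_1,k_2)\in\mathbb{N}^2$ ($\mathbb{N}=\{0,1,\dots\}$), $h_k(x)=h_{k_1}(x_1)h_{k_2}(x_2)$, $k!=k_1!k_2!$, $\|k\|_1=k_1+k_2$. *)

theory Defs
  imports "HOL-Analysis.Analysis"
begin

definition Delta3 :: "(real^3) set" where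
  "Delta3 = {v. (\<Sum>i\<in>UNIV. v $ i) = 1 \<and> (\<forall>i. v $ i \<ge> 0)}"

definition gauss2 :: "real^2 \<Rightarrow> real" where
  "gauss2 x = exp (- (norm x * norm x) / 2) / (2 * pi)"

definition herm :: "nat \<Rightarrow> real \<Rightarrow> real" where
  "herm m t = (\<Sum>j\<le>m div 2. t ^ (m - 2*j) * (-1) ^ j * (1/2) ^ j / (fact j * fact (m - 2*j)))"

definition herm2 :: "nat \<times> nat \<Rightarrow> real^2 \<Rightarrow> real" where
  "herm2 k x = herm (fst k) (x $ 1) * herm (snd k) (x $ 2)"

definition kfact :: "nat \<times> nat \<Rightarrow> real" where
  "kfact k = fact (fst k) * fact (snd k)"

definition hcoef :: "nat \<times> nat \<Rightarrow> (real^2 \<Rightarrow> real^3) \<Rightarrow> real^3" where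
  "hcoef k f = (\<chi> i. LINT x|lborel. sqrt (kfact k) * herm2 k x * (f x $ i) * gauss2 x)"

definition phiw :: "real \<Rightarrow> real^2 \<Rightarrow> real" where
  "phiw \<rho> x = \<rho> / (1 - (\<rho> * \<rho>)) * norm x *
     exp (- ((11/10 * \<rho> * norm x) * (11/10 * \<rho> * norm x)) / (1 - (\<rho> * \<rho>)) - (11/10 * \<rho>) / (1 - (\<rho> * \<rho>)) * norm x)"

definition level_term :: "real \<Rightarrow> (real^2 \<Rightarrow> real^3) \<Rightarrow> (real^2 \<Rightarrow> real^3) \<Rightarrow> nat \<Rightarrow> real" where
  "level_term \<rho> f g d = \<rho> ^ d *
     (\<Sum>k\<in>{k::nat\<times>nat. fst k + snd k = d}. \<bar>hcoef k f \<bullet> hcoef k g\<bar>)"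

end

theory Submission
  imports Defs "HOL-Probability.Probability" "HOL-Computational_Algebra.Polynomial"
begin

text \<open>
  By AM-GM each term \<open>|<f_k, g_k>|\<close> is at most \<open>(|f_k|^2 + |g_k|^2) / 2\<close>, and
  \<open>\<rho>^d \<le> \<rho>^2\<close> for \<open>d \<ge> 2\<close>, so the left-hand side is at most \<open>\<rho>^2 / 2\<close> times the
  sum of all squared Hermite coefficients of \<open>f\<close> and \<open>g\<close>. The functions
  \<open>sqrt(k!) h_k\<close> are orthonormal for the Gaussian measure, so Bessel's inequality bounds
  each of these sums by \<open>\<integral> |f|^2 \<gamma> \<le> 1\<close>, the simplex lying in the unit ball; hence the
  left-hand side is at most \<open>\<rho>^2\<close>.

  Conversely \<open>|v|^2 \<ge> 1/3\<close> on the simplex, and \<open>exp (-t) \<ge> 1 - t\<close> bounds \<open>\<phi>\<close> from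
  below by a polynomial in \<open>|x|^2\<close> whose Gaussian integral is at least \<open>3\<rho>/5\<close>. So the
  right-hand side is at least \<open>(5\<rho>/2) (2\<rho>/5) = \<rho>^2\<close>.
\<close>

section \<open>Hermite polynomials\<close>

lemma le_even_diff_iff: "i \<le> m \<and> even (m - i) \<longleftrightarrow> (\<exists>j. m = i + 2*j)" for i m :: nat
proof
  assume "i \<le> m \<and> even (m - i)"
  then obtain j where "m - i = 2*j" "i \<le> m" by (blast elim: evenE)
  then show "\<exists>j. m = i + 2*j" by (intro exI[of _ j]) simp
qed auto

definition herm_term :: "nat \<Rightarrow> nat \<Rightarrow> real" where
  "herm_term j i = (-1) ^ j * (1/2) ^ j / (fact j * fact i)"

definition herm_coeff :: "nat \<Rightarrow> nat \<Rightarrow> real" where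
  "herm_coeff m i = (if i \<le> m \<and> even (m - i) then herm_term ((m - i) div 2) i else 0)"

lemma herm_term_Suc_right: "real (Suc i) * herm_term j (Suc i) = herm_term j i"
  by (simp add: herm_term_def field_simps del: of_nat_Suc)

lemma herm_term_Suc_left: "2 * real (Suc j) * herm_term (Suc j) i = - herm_term j i"
  by (simp add: herm_term_def field_simps del: of_nat_Suc)

lemma herm_coeff_eq: "herm_coeff (i + 2*j) i = herm_term j i"
  by (simp add: herm_coeff_def)

lemma herm_coeff_eq_0: "\<nexists>j. m = i + 2*j \<Longrightarrow> herm_coeff m i = 0"
  by (simp only: herm_coeff_def le_even_diff_iff if_False)

lemma herm_coeff_Suc_Suc: "real (Suc i) * herm_coeff (Suc m) (Suc i) = herm_coeff m i"
proof (cases "\<exists>j. m = i + 2*j")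
  case True
  then obtain j where "m = i + 2*j" by blast
  then show ?thesis using herm_coeff_eq herm_term_Suc_right by (metis add_Suc)
next
  case False
  then show ?thesis by (simp add: herm_coeff_eq_0)
qed

lemma herm_coeff_rec:
  "real (Suc m) * herm_coeff (Suc m) i =
     (if i = 0 then 0 else herm_coeff m (i - 1)) - real (Suc i) * herm_coeff m (Suc i)"
proof (cases "\<exists>j. Suc m = i + 2*j")
  case True
  then obtain j where j: "Suc m = i + 2*j" by blast
  consider j' where "i = 0" "j = Suc j'" | i' where "i = Suc i'" "j = 0"
    | i' j' where "i = Suc i'" "j = Suc j'"
    using j by (cases i; cases j) auto
  then show ?thesis
  proof cases
    case (1 j')
    then show ?thesis
      using j herm_term_Suc_right[of 0 j'] herm_term_Suc_left[of j' 0]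
      by (simp add: herm_coeff_def algebra_simps)
  next
    case (2 i')
    then show ?thesis
      using j herm_term_Suc_right[of i' 0] by (simp add: herm_coeff_def)
  next
    case (3 i' j')
    then show ?thesis
      using j herm_term_Suc_right[of i' "Suc j'"] herm_term_Suc_right[of "Suc i'" j']
        herm_term_Suc_left[of j' "Suc i'"]
      by (simp add: herm_coeff_def algebra_simps)
  qed
next
  case False
  have "herm_coeff m (i - 1) = 0" if "i > 0"
  proof (rule herm_coeff_eq_0, rule notI)
    assume "\<exists>j. m = i - 1 + 2*j"
    then obtain j where "m = i - 1 + 2*j" by blast
    then have "Suc m = i + 2*j" using that by simp
    with False show False by blast
  qed
  moreover have "herm_coeff m (Suc i) = 0"
  proof (rule herm_coeff_eq_0, rule notI)
    assume "\<exists>j. m = Suc i + 2*j"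
    then obtain j where "m = Suc i + 2*j" by blast
    then have "Suc m = i + 2 * Suc j" by simp
    with False show False by blast
  qed
  ultimately show ?thesis using herm_coeff_eq_0[OF False] by simp
qed

definition herm_poly :: "nat \<Rightarrow> real poly" where
  "herm_poly m = (\<Sum>i\<le>m. monom (herm_coeff m i) i)"

lemma coeff_herm_poly: "coeff (herm_poly m) i = herm_coeff m i"
  by (simp add: herm_poly_def coeff_sum) (simp add: herm_coeff_def)

lemma herm_poly_0: "herm_poly 0 = 1"
  by (rule poly_eqI) (simp add: coeff_herm_poly herm_coeff_def herm_term_def)

lemma pderiv_herm_poly: "pderiv (herm_poly (Suc m)) = herm_poly m"
  by (rule poly_eqI) (simp add: coeff_pderiv coeff_herm_poly herm_coeff_Suc_Suc del: of_nat_Suc)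

lemma herm_poly_Suc:
  "smult (of_nat (Suc m)) (herm_poly (Suc m)) = pCons 0 (herm_poly m) - pderiv (herm_poly m)"
proof (rule poly_eqI)
  fix i
  show "coeff (smult (of_nat (Suc m)) (herm_poly (Suc m))) i =
      coeff (pCons 0 (herm_poly m) - pderiv (herm_poly m)) i"
    using herm_coeff_rec[of m i] by (cases i) (simp_all add: coeff_pderiv coeff_herm_poly)
qed

lemma poly_herm_poly: "poly (herm_poly m) t = herm m t"
proof -
  have "poly (herm_poly m) t = (\<Sum>i\<le>m. herm_coeff m i * t^i)"
    by (simp add: herm_poly_def poly_sum poly_monom)
  also have "\<dots> = (\<Sum>i\<in>(\<lambda>j. m - 2*j) ` {..m div 2}. herm_coeff m i * t^i)"
  proof (rule sum.mono_neutral_right)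
    show "(\<lambda>j. m - 2*j) ` {..m div 2} \<subseteq> {..m}" by auto
    show "\<forall>i\<in>{..m} - (\<lambda>j. m - 2*j) ` {..m div 2}. herm_coeff m i * t^i = 0"
    proof
      fix i assume i: "i \<in> {..m} - (\<lambda>j. m - 2*j) ` {..m div 2}"
      have "\<nexists>j. m = i + 2*j"
      proof
        assume "\<exists>j. m = i + 2*j"
        then obtain j where "m = i + 2*j" by blast
        then have "j \<le> m div 2" "i = m - 2*j" by auto
        with i show False by auto
      qed
      then show "herm_coeff m i * t^i = 0" by (simp add: herm_coeff_eq_0)
    qed
  qed simp
  also have "\<dots> = (\<Sum>j\<le>m div 2. herm_coeff m (m - 2*j) * t^(m - 2*j))"
    by (subst sum.reindex) (auto simp: inj_on_def)
  also have "\<dots> = herm m t"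
    unfolding herm_def
  proof (rule sum.cong)
    fix j assume "j \<in> {..m div 2}"
    then have "herm_coeff m (m - 2*j) = herm_term j (m - 2*j)"
      using herm_coeff_eq[of "m - 2*j" j] by simp
    then show "herm_coeff m (m - 2*j) * t^(m - 2*j) =
        t ^ (m - 2*j) * (-1) ^ j * (1/2) ^ j / (fact j * fact (m - 2*j))"
      by (simp add: herm_term_def)
  qed simp
  finally show ?thesis .
qed

lemma funpow_pderiv_herm_poly: "(pderiv ^^ n) (herm_poly (n + m)) = herm_poly m"
  by (induction n) (simp_all add: funpow_Suc_right pderiv_herm_poly del: funpow.simps)

lemma funpow_pderiv_eq_0:
  fixes p :: "'a::{comm_semiring_1,semiring_no_zero_divisors,semiring_char_0} poly"
  assumes "degree p < n"
  shows "(pderiv ^^ n) p = 0"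
  using assms
proof (induction n arbitrary: p)
  case (Suc n)
  show ?case
  proof (cases n)
    case 0
    then show ?thesis using Suc.prems by (simp add: pderiv_eq_0_iff)
  next
    case (Suc n')
    then have "(pderiv ^^ n) (pderiv p) = 0"
      using Suc.prems by (intro Suc.IH) (simp add: degree_pderiv)
    then show ?thesis by (simp add: funpow_Suc_right del: funpow.simps)
  qed
qed simp

lemma degree_herm_poly: "degree (herm_poly m) \<le> m"
  by (rule degree_le) (simp add: coeff_herm_poly herm_coeff_def)

section \<open>Gaussian expectations of polynomials\<close>

definition normal_moment :: "nat \<Rightarrow> real" where
  "normal_moment i = (LINT t|lborel. std_normal_density t * t^i)"

definition normal_expectation :: "real poly \<Rightarrow> real" where
  "normal_expectation p = (LINT t|lborel. std_normal_density t * poly p t)"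

lemma normal_moment_0: "normal_moment 0 = 1"
  using integral_std_normal_moment_even[of 0] by (simp add: normal_moment_def)

lemma normal_moment_1: "normal_moment 1 = 0"
  using integral_std_normal_moment_odd[of 0] by (simp add: normal_moment_def)

lemma normal_moment_Suc_Suc: "normal_moment (Suc (Suc i)) = real (Suc i) * normal_moment i"
proof (cases "even i")
  case True
  then obtain k where k: "i = 2*k" by (rule evenE)
  have num: "(fact (2 * Suc k) :: real) = (2 * (real k + 1)) * ((2 * real k + 1) * fact (2*k))"
    by (simp add: algebra_simps)
  have den: "(2 ^ Suc k * fact (Suc k) :: real) = (2 * (real k + 1)) * (2^k * fact k)"
    by simp
  have "fact (2 * Suc k) / (2 ^ Suc k * fact (Suc k)) =
      (2 * real k + 1) * fact (2*k) / (2^k * fact k :: real)"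
    unfolding num den by (rule mult_divide_mult_cancel_left) simp
  then show ?thesis
    using k integral_std_normal_moment_even[of k] integral_std_normal_moment_even[of "Suc k"]
    by (simp add: normal_moment_def)
next
  case False
  then obtain k where "i = 2*k + 1" by (rule oddE)
  then show ?thesis
    using integral_std_normal_moment_odd[of k] integral_std_normal_moment_odd[of "Suc k"]
    by (simp add: normal_moment_def)
qed

lemma poly_eq_sum_lessThan:
  fixes p :: "'a::comm_semiring_1 poly"
  assumes "degree p < N"
  shows "poly p t = (\<Sum>i<N. coeff p i * t^i)"
proof -
  have "poly p t = (\<Sum>i\<le>degree p. coeff p i * t^i)" by (rule poly_altdef)
  also have "\<dots> = (\<Sum>i<N. coeff p i * t^i)"
    using assms by (intro sum.mono_neutral_left) (auto simp: coeff_eq_0)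
  finally show ?thesis .
qed

lemma integrable_normal_poly: "integrable lborel (\<lambda>t. std_normal_density t * poly p t)"
proof -
  have "(\<lambda>t. std_normal_density t * poly p t) =
      (\<lambda>t. \<Sum>i<Suc (degree p). coeff p i * (std_normal_density t * t^i))"
    by (simp add: poly_eq_sum_lessThan[of p "Suc (degree p)"] sum_distrib_left mult_ac
        del: sum.lessThan_Suc)
  then show ?thesis
    by (simp add: integrable_std_normal_moment del: sum.lessThan_Suc)
qed

lemma normal_expectation_eq_moments:
  "degree p < N \<Longrightarrow> normal_expectation p = (\<Sum>i<N. coeff p i * normal_moment i)"
  unfolding normal_expectation_def normal_moment_def
  by (simp add: poly_eq_sum_lessThan sum_distrib_left mult.left_commute
      integrable_std_normal_moment)

lemma normal_expectation_add: "normal_expectation (p + q) = normal_expectation p + normal_expectation q"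
  unfolding normal_expectation_def by (simp add: distrib_left integrable_normal_poly)

lemma normal_expectation_diff: "normal_expectation (p - q) = normal_expectation p - normal_expectation q"
  unfolding normal_expectation_def by (simp add: right_diff_distrib integrable_normal_poly)

lemma normal_expectation_smult: "normal_expectation (smult c p) = c * normal_expectation p"
  unfolding normal_expectation_def by (simp add: mult.left_commute[of _ c])

lemma normal_expectation_1: "normal_expectation 1 = 1"
  using normal_expectation_eq_moments[of 1 1] normal_moment_0 by simp

text \<open>Since \<open>pCons 0 p\<close> is \<open>X * p\<close>, this is Gaussian integration by parts
  \<open>E[X p(X)] = E[p'(X)]\<close>; on monomials it is the moment recursion.\<close>

lemma normal_expectation_pCons_0: "normal_expectation (pCons 0 p) = normal_expectation (pderiv p)"
proof -
  define D where "D = degree p"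
  have "normal_expectation (pCons 0 p) = (\<Sum>i<Suc (Suc D). coeff (pCons 0 p) i * normal_moment i)"
    by (rule normal_expectation_eq_moments) (simp add: D_def)
  also have "\<dots> = (\<Sum>i<D. coeff p (Suc i) * normal_moment (Suc (Suc i)))"
    by (simp only: sum.lessThan_Suc_shift) (simp add: normal_moment_1[unfolded One_nat_def])
  also have "\<dots> = (\<Sum>i<Suc D. coeff (pderiv p) i * normal_moment i)"
    by (simp add: coeff_pderiv D_def coeff_eq_0 normal_moment_Suc_Suc mult_ac)
  also have "\<dots> = normal_expectation (pderiv p)"
    by (rule normal_expectation_eq_moments[symmetric]) (simp add: D_def degree_pderiv)
  finally show ?thesis .
qed

lemma normal_expectation_herm_poly_mult:
  "normal_expectation (herm_poly n * q) = normal_expectation ((pderiv ^^ n) q) / fact n"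
proof (induction n arbitrary: q)
  case 0
  then show ?case by (simp add: herm_poly_0)
next
  case (Suc n)
  have "real (Suc n) * normal_expectation (herm_poly (Suc n) * q)
      = normal_expectation ((pCons 0 (herm_poly n) - pderiv (herm_poly n)) * q)"
    by (simp only: normal_expectation_smult[symmetric] herm_poly_Suc[symmetric] mult_smult_left)
  also have "\<dots> = normal_expectation (pCons 0 (herm_poly n * q)) - normal_expectation (pderiv (herm_poly n) * q)"
    by (simp add: left_diff_distrib normal_expectation_diff)
  also have "\<dots> = normal_expectation (herm_poly n * pderiv q)"
    by (simp add: normal_expectation_pCons_0 pderiv_mult normal_expectation_add ac_simps)
  also have "\<dots> = normal_expectation ((pderiv ^^ Suc n) q) / fact n"
    by (simp add: Suc.IH funpow_Suc_right del: funpow.simps)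
  finally show ?case by (simp add: field_simps del: of_nat_Suc)
qed

lemma normal_expectation_herm_poly_herm_poly:
  "normal_expectation (herm_poly n * herm_poly m) = (if n = m then 1 / fact n else 0)"
proof (cases "n \<le> m")
  case True
  then obtain d where m: "m = n + d" using le_iff_add by blast
  have "normal_expectation (herm_poly d) = (if d = 0 then 1 else 0)"
    using normal_expectation_herm_poly_mult[of d 1]
    by (auto simp: herm_poly_0 normal_expectation_1 funpow_pderiv_eq_0 normal_expectation_def)
  then show ?thesis
    by (simp add: normal_expectation_herm_poly_mult m funpow_pderiv_herm_poly)
next
  case False
  then have "(pderiv ^^ n) (herm_poly m) = 0"
    using degree_herm_poly[of m] by (intro funpow_pderiv_eq_0) simp
  moreover have "normal_expectation 0 = 0" by (simp add: normal_expectation_def)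
  ultimately show ?thesis
    using False by (simp add: normal_expectation_herm_poly_mult)
qed

section \<open>Separable Gaussian integrals on the plane\<close>

lemma has_bochner_integral_lborel_prod_Basis:
  fixes w :: "'a::euclidean_space \<Rightarrow> real \<Rightarrow> real"
  assumes int: "\<And>b. b \<in> Basis \<Longrightarrow> integrable lborel (w b)"
  shows "has_bochner_integral lborel (\<lambda>x::'a. \<Prod>b\<in>Basis. w b (x \<bullet> b))
           (\<Prod>b\<in>Basis. LINT t|lborel. w b t)"
proof -
  interpret product_sigma_finite "\<lambda>_::'a. lborel :: real measure" by standard
  let ?g = "\<lambda>f. \<Sum>b\<in>(Basis::'a set). f b *\<^sub>R b"
  have gm: "?g \<in> measurable (\<Pi>\<^sub>M b\<in>(Basis::'a set). lborel) borel" by measurable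
  have wm: "\<And>b. b \<in> Basis \<Longrightarrow> w b \<in> borel_measurable borel"
    using int by (simp add: borel_measurable_integrable)
  have fm: "(\<lambda>x::'a. \<Prod>b\<in>Basis. w b (x \<bullet> b)) \<in> borel_measurable borel"
    by (intro borel_measurable_prod measurable_compose[OF _ wm]) auto
  have comp: "(\<lambda>f. \<Prod>b\<in>Basis. w b (?g f \<bullet> b)) = (\<lambda>f. \<Prod>b\<in>Basis. w b (f b))"
  proof (intro ext prod.cong refl)
    fix f :: "'a \<Rightarrow> real" and b :: 'a assume b: "b \<in> Basis"
    have "?g f \<bullet> b = (\<Sum>b'\<in>Basis. f b' * (b' \<bullet> b))" by (simp add: inner_sum_left)
    also have "\<dots> = f b" using b by (simp add: inner_Basis if_distrib cong: if_cong)
    finally show "w b (?g f \<bullet> b) = w b (f b)" by simp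
  qed
  have "integrable (\<Pi>\<^sub>M b\<in>Basis. lborel) (\<lambda>f. \<Prod>b\<in>Basis. w b (f b))"
    by (rule product_integrable_prod) (auto intro: int)
  then have "integrable lborel (\<lambda>x::'a. \<Prod>b\<in>Basis. w b (x \<bullet> b))"
    by (subst lborel_eq) (simp add: integrable_distr_eq[OF gm fm] comp)
  moreover have "integral\<^sup>L (\<Pi>\<^sub>M b\<in>Basis. lborel) (\<lambda>f. \<Prod>b\<in>Basis. w b (f b)) =
      (\<Prod>b\<in>Basis. LINT t|lborel. w b t)"
    by (rule product_integral_prod) (auto intro: int)
  then have "(LINT x|lborel. (\<Prod>b\<in>Basis. w b (x \<bullet> b))) = (\<Prod>b\<in>Basis. LINT t|lborel. w b t)"
    by (subst lborel_eq) (simp add: integral_distr[OF gm fm] comp)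
  ultimately show ?thesis
    by (simp add: has_bochner_integral_iff)
qed

lemma Basis_vec_2: "(Basis :: (real^2) set) = {axis 1 1, axis 2 1}"
  by (auto simp: Basis_vec_def) (metis exhaust_2)

lemma norm_mult_self_vec: "norm v * norm v = (\<Sum>i\<in>UNIV. v $ i * v $ i)"
  for v :: "real^'n"
proof -
  have "norm v * norm v = v \<bullet> v" by (simp add: power2_norm_eq_inner[symmetric] power2_eq_square)
  then show ?thesis by (simp add: inner_vec_def)
qed

lemma norm_vec_2_sq: "norm (x::real^2) * norm x = (x$1)^2 + (x$2)^2"
  by (simp add: norm_mult_self_vec sum_2 power2_eq_square)

lemma gauss2_eq_std_normal_density: "gauss2 x = std_normal_density (x$1) * std_normal_density (x$2)"
proof -
  have "gauss2 x = exp (- ((x$1)^2) / 2 + - ((x$2)^2) / 2) / (sqrt (2*pi) * sqrt (2*pi))"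
    unfolding gauss2_def norm_vec_2_sq by (simp add: field_simps)
  then show ?thesis by (simp only: std_normal_density_def exp_add) simp
qed

lemma gauss2_nonneg: "0 \<le> gauss2 x"
  by (simp add: gauss2_def)

lemma gauss2_measurable [measurable]: "gauss2 \<in> borel_measurable lborel"
  unfolding gauss2_def by measurable

lemma has_bochner_integral_gauss2_separable:
  fixes u v :: "real \<Rightarrow> real"
  assumes "has_bochner_integral lborel (\<lambda>t. std_normal_density t * u t) a"
      and "has_bochner_integral lborel (\<lambda>t. std_normal_density t * v t) b"
  shows "has_bochner_integral lborel (\<lambda>x::real^2. u (x$1) * v (x$2) * gauss2 x) (a * b)"
proof -
  define w where "w = (\<lambda>b::real^2. if b = axis 1 1 then (\<lambda>t. std_normal_density t * u t)
                                   else (\<lambda>t. std_normal_density t * v t))"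
  have "integrable lborel (w b)" if "b \<in> Basis" for b
    using assms by (simp add: w_def has_bochner_integral_iff)
  then have "has_bochner_integral lborel (\<lambda>x. \<Prod>b\<in>Basis. w b (x \<bullet> b))
      (\<Prod>b\<in>Basis. LINT t|lborel. w b t)"
    by (rule has_bochner_integral_lborel_prod_Basis)
  moreover have "(\<lambda>x::real^2. \<Prod>b\<in>Basis. w b (x \<bullet> b)) = (\<lambda>x. u (x$1) * v (x$2) * gauss2 x)"
    by (simp add: Basis_vec_2 axis_eq_axis w_def inner_axis gauss2_eq_std_normal_density mult_ac)
  moreover have "(\<Prod>b\<in>(Basis::(real^2) set). LINT t|lborel. w b t) = a * b"
    using assms by (simp add: Basis_vec_2 axis_eq_axis w_def has_bochner_integral_iff)
  ultimately show ?thesis by simp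
qed

lemma has_bochner_integral_std_normal_moment:
  "has_bochner_integral lborel (\<lambda>t. std_normal_density t * t^i) (normal_moment i)"
  by (simp add: has_bochner_integral_iff normal_moment_def integrable_std_normal_moment)

lemma has_bochner_integral_gauss2_monomial:
  "has_bochner_integral lborel (\<lambda>x::real^2. (x$1)^i * (x$2)^j * gauss2 x)
     (normal_moment i * normal_moment j)"
  by (intro has_bochner_integral_gauss2_separable has_bochner_integral_std_normal_moment)

lemma has_bochner_integral_gauss2: "has_bochner_integral lborel gauss2 1"
  using has_bochner_integral_gauss2_monomial[of 0 0] by (simp add: normal_moment_0)

lemma normal_moment_2: "normal_moment 2 = 1"
  by (simp add: numeral_eq_Suc normal_moment_Suc_Suc normal_moment_0)

lemma normal_moment_4: "normal_moment 4 = 3"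
  by (simp add: numeral_eq_Suc normal_moment_Suc_Suc normal_moment_0)

lemma has_bochner_integral_gauss2_norm_sq:
  "has_bochner_integral lborel (\<lambda>x. (norm x)\<^sup>2 * gauss2 x) 2"
proof -
  have "has_bochner_integral lborel
      (\<lambda>x::real^2. (x$1)^2 * (x$2)^0 * gauss2 x + (x$1)^0 * (x$2)^2 * gauss2 x)
      (normal_moment 2 * normal_moment 0 + normal_moment 0 * normal_moment 2)"
    by (intro has_bochner_integral_add has_bochner_integral_gauss2_monomial)
  then show ?thesis
    by (simp add: power2_eq_square[of "norm _"] norm_vec_2_sq normal_moment_0 normal_moment_2
        algebra_simps)
qed

lemma has_bochner_integral_gauss2_norm_pow4:
  "has_bochner_integral lborel (\<lambda>x. ((norm x)\<^sup>2)\<^sup>2 * gauss2 x) 8"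
proof -
  have "has_bochner_integral lborel
      (\<lambda>x::real^2. (x$1)^4 * (x$2)^0 * gauss2 x + 2 * ((x$1)^2 * (x$2)^2 * gauss2 x)
         + (x$1)^0 * (x$2)^4 * gauss2 x)
      (normal_moment 4 * normal_moment 0 + 2 * (normal_moment 2 * normal_moment 2)
         + normal_moment 0 * normal_moment 4)"
    by (intro has_bochner_integral_add has_bochner_integral_mult_right
        has_bochner_integral_gauss2_monomial)
  moreover have "((norm x)\<^sup>2)\<^sup>2 = (x$1)^4 + 2 * ((x$1)^2 * (x$2)^2) + (x$2)^4" for x :: "real^2"
  proof -
    have "(norm x)\<^sup>2 = (x$1)^2 + (x$2)^2" using norm_vec_2_sq by (simp add: power2_eq_square)
    then show ?thesis by (simp add: algebra_simps eval_nat_numeral)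
  qed
  ultimately show ?thesis
    by (simp add: normal_moment_0 normal_moment_2 normal_moment_4 algebra_simps)
qed

section \<open>The Hermite basis and Bessel's inequality\<close>

lemma has_bochner_integral_herm_orthonormal:
  "has_bochner_integral lborel
     (\<lambda>t. std_normal_density t * ((sqrt (fact n) * herm n t) * (sqrt (fact m) * herm m t)))
     (if n = m then 1 else 0)"
proof -
  define p where "p = smult (sqrt (fact n) * sqrt (fact m)) (herm_poly n * herm_poly m)"
  have eq: "(\<lambda>t. std_normal_density t * ((sqrt (fact n) * herm n t) * (sqrt (fact m) * herm m t))) =
      (\<lambda>t. std_normal_density t * poly p t)"
    by (simp add: p_def poly_herm_poly mult_ac)
  have "normal_expectation p = (if n = m then 1 else 0)"
    by (simp add: p_def normal_expectation_smult normal_expectation_herm_poly_herm_poly)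
  then show ?thesis
    unfolding eq using integrable_normal_poly[of p]
    by (simp add: has_bochner_integral_iff normal_expectation_def)
qed

definition herm_basis :: "nat \<times> nat \<Rightarrow> real^2 \<Rightarrow> real" where
  "herm_basis k x = sqrt (kfact k) * herm2 k x"

lemma herm_basis_measurable [measurable]: "herm_basis k \<in> borel_measurable lborel"
  unfolding herm_basis_def herm2_def herm_def by measurable

lemma has_bochner_integral_herm_basis_orthonormal:
  "has_bochner_integral lborel (\<lambda>x. herm_basis k x * herm_basis l x * gauss2 x)
     (if k = l then 1 else 0)"
proof -
  define u where "u i j t = (sqrt (fact i) * herm i t) * (sqrt (fact j) * herm j t)" for i j t
  have "has_bochner_integral lborel (\<lambda>x. u (fst k) (fst l) (x$1) * u (snd k) (snd l) (x$2) * gauss2 x)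
      ((if fst k = fst l then 1 else 0) * (if snd k = snd l then 1 else 0))"
    unfolding u_def
    by (intro has_bochner_integral_gauss2_separable has_bochner_integral_herm_orthonormal)
  moreover have "(\<lambda>x. u (fst k) (fst l) (x$1) * u (snd k) (snd l) (x$2) * gauss2 x) =
      (\<lambda>x. herm_basis k x * herm_basis l x * gauss2 x)"
    by (simp add: u_def herm_basis_def herm2_def kfact_def real_sqrt_mult mult_ac)
  moreover have "(if fst k = fst l then 1 else 0) * (if snd k = snd l then 1 else 0) =
      (if k = l then 1 else (0::real))"
    by (simp add: prod_eq_iff)
  ultimately show ?thesis by simp
qed

lemma bessel_inequality:
  fixes e :: "'k \<Rightarrow> 'a \<Rightarrow> real" and u w :: "'a \<Rightarrow> real"
  assumes "finite K" and w: "\<And>x. 0 \<le> w x"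
    and orth: "\<And>k l. has_bochner_integral M (\<lambda>x. e k x * e l x * w x) (if k = l then 1 else 0)"
    and int_eu: "\<And>k. integrable M (\<lambda>x. e k x * u x * w x)"
    and int_uu: "integrable M (\<lambda>x. u x * u x * w x)"
  shows "(\<Sum>k\<in>K. (LINT x|M. e k x * u x * w x)\<^sup>2) \<le> (LINT x|M. u x * u x * w x)"
proof -
  define c where "c k = (LINT x|M. e k x * u x * w x)" for k
  define S where "S x = (\<Sum>k\<in>K. c k * e k x)" for x
  have "(\<lambda>x. u x * S x * w x) = (\<lambda>x. \<Sum>k\<in>K. c k * (e k x * u x * w x))"
    by (simp add: S_def sum_distrib_left sum_distrib_right mult_ac)
  then have uS: "has_bochner_integral M (\<lambda>x. u x * S x * w x) (\<Sum>k\<in>K. c k * c k)"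
    by (simp add: has_bochner_integral_iff int_eu c_def)
  have "has_bochner_integral M (\<lambda>x. \<Sum>k\<in>K. \<Sum>l\<in>K. c k * c l * (e k x * e l x * w x))
      (\<Sum>k\<in>K. \<Sum>l\<in>K. c k * c l * (if k = l then 1 else 0))"
    by (intro has_bochner_integral_sum has_bochner_integral_mult_right orth)
  moreover have "(\<lambda>x. \<Sum>k\<in>K. \<Sum>l\<in>K. c k * c l * (e k x * e l x * w x)) = (\<lambda>x. S x * S x * w x)"
    by (rule ext) (simp only: S_def sum_product, simp only: sum_distrib_right, simp add: mult_ac)
  moreover have "(\<Sum>k\<in>K. \<Sum>l\<in>K. c k * c l * (if k = l then 1 else 0)) = (\<Sum>k\<in>K. c k * c k)"
    using \<open>finite K\<close> by (simp add: if_distrib[of "\<lambda>z. _ * z"] cong: if_cong)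
  ultimately have SS: "has_bochner_integral M (\<lambda>x. S x * S x * w x) (\<Sum>k\<in>K. c k * c k)"
    by simp
  have "has_bochner_integral M (\<lambda>x. u x * u x * w x - 2 * (u x * S x * w x) + S x * S x * w x)
      ((LINT x|M. u x * u x * w x) - 2 * (\<Sum>k\<in>K. c k * c k) + (\<Sum>k\<in>K. c k * c k))"
    using int_uu uS SS
    by (intro has_bochner_integral_add has_bochner_integral_diff has_bochner_integral_mult_right
        has_bochner_integral_integrable)
  moreover have "(\<lambda>x. u x * u x * w x - 2 * (u x * S x * w x) + S x * S x * w x) =
      (\<lambda>x. (u x - S x) * (u x - S x) * w x)"
    by (simp add: algebra_simps)
  ultimately have "has_bochner_integral M (\<lambda>x. (u x - S x) * (u x - S x) * w x)
      ((LINT x|M. u x * u x * w x) - 2 * (\<Sum>k\<in>K. c k * c k) + (\<Sum>k\<in>K. c k * c k))"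
    by simp
  moreover have "0 \<le> (LINT x|M. (u x - S x) * (u x - S x) * w x)"
    by (rule integral_nonneg_AE) (simp add: w)
  ultimately show ?thesis
    by (simp add: c_def power2_eq_square has_bochner_integral_iff)
qed

lemma Delta3_component_bounds:
  assumes "v \<in> Delta3"
  shows "0 \<le> v $ i" "v $ i \<le> 1"
proof -
  show "0 \<le> v $ i" using assms by (simp add: Delta3_def)
  have "v $ i \<le> (\<Sum>j\<in>UNIV. v $ j)"
    using assms by (intro member_le_sum) (auto simp: Delta3_def)
  then show "v $ i \<le> 1" using assms by (simp add: Delta3_def)
qed

lemma norm_sq_Delta3_bounds:
  assumes "v \<in> Delta3"
  shows "1/3 \<le> norm v * norm v" "norm v * norm v \<le> 1"
proof -
  have nv: "norm v * norm v = (v$1)*(v$1) + (v$2)*(v$2) + (v$3)*(v$3)"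
    by (simp add: norm_mult_self_vec sum_3)
  have s: "v$1 + v$2 + v$3 = 1" using assms by (simp add: Delta3_def sum_3)
  have "0 \<le> (v$1 - v$2)*(v$1 - v$2) + (v$2 - v$3)*(v$2 - v$3) + (v$1 - v$3)*(v$1 - v$3)" by simp
  moreover have "(v$1 + v$2 + v$3) * (v$1 + v$2 + v$3) = 1" using s by simp
  ultimately show "1/3 \<le> norm v * norm v" unfolding nv by (simp add: algebra_simps)
  have "v$i * v$i \<le> v$i" for i
    using Delta3_component_bounds[OF assms] by (simp add: mult_left_le)
  then have "(v$1)*(v$1) + (v$2)*(v$2) + (v$3)*(v$3) \<le> v$1 + v$2 + v$3"
    by (intro add_mono)
  then show "norm v * norm v \<le> 1" unfolding nv using s by simp
qed

lemma abs_le_square_plus_1: "\<bar>h\<bar> \<le> h * h + 1" for h :: real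
proof -
  have "0 \<le> (\<bar>h\<bar> - 1) * (\<bar>h\<bar> - 1)" by simp
  then show ?thesis by (simp add: algebra_simps abs_mult_self_eq)
qed

lemma integrable_herm_basis_mult_bounded:
  assumes [measurable]: "u \<in> borel_measurable lborel" and u: "\<And>x. \<bar>u x\<bar> \<le> 1"
  shows "integrable lborel (\<lambda>x. herm_basis k x * u x * gauss2 x)"
proof (rule Bochner_Integration.integrable_bound)
  show "integrable lborel (\<lambda>x. herm_basis k x * herm_basis k x * gauss2 x + gauss2 x)"
    using has_bochner_integral_herm_basis_orthonormal[of k k] has_bochner_integral_gauss2
    by (simp add: has_bochner_integral_iff)
  show "AE x in lborel. norm (herm_basis k x * u x * gauss2 x) \<le>
      norm (herm_basis k x * herm_basis k x * gauss2 x + gauss2 x)"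
  proof (rule AE_I2)
    fix x
    have "\<bar>herm_basis k x\<bar> * \<bar>u x\<bar> \<le> \<bar>herm_basis k x\<bar>"
      using u[of x] by (simp add: mult_left_le)
    also have "\<dots> \<le> herm_basis k x * herm_basis k x + 1"
      by (rule abs_le_square_plus_1)
    finally have "\<bar>herm_basis k x\<bar> * \<bar>u x\<bar> * gauss2 x \<le> (herm_basis k x * herm_basis k x + 1) * gauss2 x"
      using gauss2_nonneg by (rule mult_right_mono)
    then show "norm (herm_basis k x * u x * gauss2 x) \<le>
        norm (herm_basis k x * herm_basis k x * gauss2 x + gauss2 x)"
      using gauss2_nonneg[of x] by (simp add: abs_mult algebra_simps mult_right_mono)
  qed
qed measurable

lemma integrable_square_mult_gauss2_bounded:
  assumes [measurable]: "u \<in> borel_measurable lborel" and u: "\<And>x. \<bar>u x\<bar> \<le> 1"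
  shows "integrable lborel (\<lambda>x. u x * u x * gauss2 x)"
proof (rule Bochner_Integration.integrable_bound)
  show "integrable lborel gauss2"
    using has_bochner_integral_gauss2 by (simp add: has_bochner_integral_iff)
  show "AE x in lborel. norm (u x * u x * gauss2 x) \<le> norm (gauss2 x)"
  proof (rule AE_I2)
    fix x
    have "\<bar>u x\<bar> * \<bar>u x\<bar> \<le> 1 * 1" using u[of x] by (intro mult_mono) auto
    then have "\<bar>u x * u x\<bar> * gauss2 x \<le> 1 * gauss2 x"
      using gauss2_nonneg by (intro mult_right_mono) (auto simp: abs_mult)
    then show "norm (u x * u x * gauss2 x) \<le> norm (gauss2 x)"
      using gauss2_nonneg[of x] by (simp add: abs_mult)
  qed
qed measurable

lemma sum_hcoef_inner_self_le_1:
  assumes [measurable]: "h \<in> borel_measurable lborel" and h: "\<forall>x. h x \<in> Delta3"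
    and "finite K"
  shows "(\<Sum>k\<in>K. hcoef k h \<bullet> hcoef k h) \<le> 1"
proof -
  have b: "\<bar>h x $ i\<bar> \<le> 1" for x i
    using Delta3_component_bounds[OF h[rule_format]] by (simp add: abs_le_iff)
  have m: "(\<lambda>x. h x $ i) \<in> borel_measurable lborel" for i
    by (rule measurable_compose[OF _ borel_measurable_nth]) simp
  have int: "integrable lborel (\<lambda>x. h x $ i * h x $ i * gauss2 x)" for i
    by (rule integrable_square_mult_gauss2_bounded[OF m b])
  have "(\<Sum>k\<in>K. hcoef k h \<bullet> hcoef k h) =
      (\<Sum>i\<in>UNIV. \<Sum>k\<in>K. (LINT x|lborel. herm_basis k x * h x $ i * gauss2 x)\<^sup>2)"
    by (simp add: inner_vec_def hcoef_def herm_basis_def power2_eq_square sum.swap[of _ K])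
  also have "\<dots> \<le> (\<Sum>i\<in>UNIV. LINT x|lborel. h x $ i * h x $ i * gauss2 x)"
    using has_bochner_integral_herm_basis_orthonormal
    by (intro sum_mono bessel_inequality integrable_herm_basis_mult_bounded m b int
        \<open>finite K\<close> gauss2_nonneg)
  also have "\<dots> = (LINT x|lborel. (\<Sum>i\<in>UNIV. h x $ i * h x $ i * gauss2 x))"
    by (rule Bochner_Integration.integral_sum[symmetric]) (rule int)
  also have "\<dots> \<le> (LINT x|lborel. gauss2 x)"
  proof (rule integral_mono)
    show "integrable lborel (\<lambda>x. \<Sum>i\<in>UNIV. h x $ i * h x $ i * gauss2 x)"
      by (rule Bochner_Integration.integrable_sum) (rule int)
    show "integrable lborel gauss2"
      using has_bochner_integral_gauss2 by (simp add: has_bochner_integral_iff)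
    fix x
    have "(\<Sum>i\<in>UNIV. h x $ i * h x $ i) \<le> 1"
      using norm_sq_Delta3_bounds(2)[OF h[rule_format]] by (simp add: norm_mult_self_vec)
    then have "(\<Sum>i\<in>UNIV. h x $ i * h x $ i) * gauss2 x \<le> 1 * gauss2 x"
      using gauss2_nonneg by (rule mult_right_mono)
    then show "(\<Sum>i\<in>UNIV. h x $ i * h x $ i * gauss2 x) \<le> gauss2 x"
      by (simp add: sum_distrib_right)
  qed
  also have "\<dots> = 1"
    using has_bochner_integral_gauss2 by (simp add: has_bochner_integral_iff)
  finally show ?thesis .
qed

section \<open>The weight \<open>\<phi>\<close>\<close>

lemma mult_exp_neg_quadratic_ge:
  fixes a b r :: real
  assumes "0 \<le> a" "0 \<le> r"
  shows "(3/4 - a/2 - b) * r\<^sup>2 - (1/16 + a/2) * (r\<^sup>2)\<^sup>2 \<le> r * exp (- (a*r*r + b*r))"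
proof -
  have "(3/4 - a/2 - b) * r\<^sup>2 - (1/16 + a/2) * (r\<^sup>2)\<^sup>2 \<le> r * (1 - (a*r*r + b*r))"
  proof -
    have "r * (1 - (a*r*r + b*r)) - ((3/4 - a/2 - b) * r\<^sup>2 - (1/16 + a/2) * (r\<^sup>2)\<^sup>2)
        = r * (r - 2)\<^sup>2 * (r + 4) / 16 + a * (r * (r - 1))\<^sup>2 / 2"
      by (simp add: power2_eq_square field_simps)
    moreover have "0 \<le> r * (r - 2)\<^sup>2 * (r + 4) / 16 + a * (r * (r - 1))\<^sup>2 / 2"
      using assms by simp
    ultimately show ?thesis by linarith
  qed
  also have "\<dots> \<le> r * exp (- (a*r*r + b*r))"
  proof (rule mult_left_mono)
    show "1 - (a*r*r + b*r) \<le> exp (- (a*r*r + b*r))"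
      using exp_ge_add_one_self[of "- (a*r*r + b*r)"] by linarith
  qed (rule assms(2))
  finally show ?thesis .
qed

lemma phiw_eq:
  "phiw \<rho> x = \<rho> / (1 - \<rho>\<^sup>2) * norm x *
     exp (- ((11/10 * \<rho>)\<^sup>2 / (1 - \<rho>\<^sup>2) * norm x * norm x + 11/10 * \<rho> / (1 - \<rho>\<^sup>2) * norm x))"
  by (simp add: phiw_def power2_eq_square field_simps)

lemma phiw_measurable [measurable]: "phiw \<rho> \<in> borel_measurable lborel"
  unfolding phiw_def by measurable

lemma phiw_params_nonneg:
  fixes \<rho> :: real
  assumes "0 \<le> \<rho>" "\<rho> < 1"
  shows "0 \<le> \<rho> / (1 - \<rho>\<^sup>2)" "0 \<le> (11/10 * \<rho>)\<^sup>2 / (1 - \<rho>\<^sup>2)" "0 \<le> 11/10 * \<rho> / (1 - \<rho>\<^sup>2)"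
proof -
  have "0 < 1 - \<rho>\<^sup>2" using assms power_less_one_iff[of \<rho> 2] by linarith
  then show "0 \<le> \<rho> / (1 - \<rho>\<^sup>2)" "0 \<le> (11/10 * \<rho>)\<^sup>2 / (1 - \<rho>\<^sup>2)" "0 \<le> 11/10 * \<rho> / (1 - \<rho>\<^sup>2)"
    using assms by (auto intro!: divide_nonneg_pos)
qed

lemma phiw_nonneg:
  assumes "0 \<le> \<rho>" "\<rho> < 1"
  shows "0 \<le> phiw \<rho> x"
  unfolding phiw_eq
  by (intro mult_nonneg_nonneg phiw_params_nonneg(1)[OF assms] norm_ge_zero exp_ge_zero)

lemma phiw_le:
  assumes "0 \<le> \<rho>" "\<rho> < 1"
  shows "phiw \<rho> x \<le> \<rho> / (1 - \<rho>\<^sup>2) * (1 + (norm x)\<^sup>2)"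
proof -
  define c where "c = \<rho> / (1 - \<rho>\<^sup>2)"
  define t where "t = (11/10 * \<rho>)\<^sup>2 / (1 - \<rho>\<^sup>2) * norm x * norm x + 11/10 * \<rho> / (1 - \<rho>\<^sup>2) * norm x"
  have "0 \<le> c" unfolding c_def by (rule phiw_params_nonneg(1)[OF assms])
  have "0 \<le> t" unfolding t_def
    by (intro add_nonneg_nonneg mult_nonneg_nonneg norm_ge_zero phiw_params_nonneg(2,3)[OF assms])
  have "phiw \<rho> x = c * norm x * exp (- t)" by (simp add: phiw_eq c_def t_def)
  also have "\<dots> \<le> c * norm x * 1"
    using \<open>0 \<le> c\<close> \<open>0 \<le> t\<close> by (intro mult_left_mono) auto
  also have "\<dots> \<le> c * (1 + (norm x)\<^sup>2)"
  proof -
    have "norm x \<le> 1 + (norm x)\<^sup>2"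
      using abs_le_square_plus_1[of "norm x"] by (simp add: power2_eq_square)
    then show ?thesis using \<open>0 \<le> c\<close> by (simp add: mult_left_mono)
  qed
  finally show ?thesis by (simp add: c_def)
qed

lemma phiw_lower_bound:
  assumes "0 \<le> \<rho>" "\<rho> < 1"
  defines "c \<equiv> \<rho> / (1 - \<rho>\<^sup>2)" and "a \<equiv> (11/10 * \<rho>)\<^sup>2 / (1 - \<rho>\<^sup>2)" and "b \<equiv> 11/10 * \<rho> / (1 - \<rho>\<^sup>2)"
  shows "c * ((3/4 - a/2 - b) * (norm x)\<^sup>2 - (1/16 + a/2) * ((norm x)\<^sup>2)\<^sup>2) \<le> phiw \<rho> x"
proof -
  have "0 \<le> c" "0 \<le> a" unfolding c_def a_def by (intro phiw_params_nonneg assms)+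
  then have "c * ((3/4 - a/2 - b) * (norm x)\<^sup>2 - (1/16 + a/2) * ((norm x)\<^sup>2)\<^sup>2)
      \<le> c * (norm x * exp (- (a * norm x * norm x + b * norm x)))"
    by (intro mult_left_mono mult_exp_neg_quadratic_ge) simp_all
  then show ?thesis by (simp add: phiw_eq c_def a_def b_def mult.assoc)
qed

lemma integrable_phiw_gauss2:
  assumes "0 \<le> \<rho>" "\<rho> < 1"
  shows "integrable lborel (\<lambda>x. phiw \<rho> x * gauss2 x)"
proof -
  define c where "c = \<rho> / (1 - \<rho>\<^sup>2)"
  have "integrable lborel (\<lambda>x. c * (gauss2 x + (norm x)\<^sup>2 * gauss2 x))"
    using has_bochner_integral_gauss2 has_bochner_integral_gauss2_norm_sq
    by (auto simp: has_bochner_integral_iff)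
  then show ?thesis
  proof (rule Bochner_Integration.integrable_bound)
    show "AE x in lborel. norm (phiw \<rho> x * gauss2 x) \<le> norm (c * (gauss2 x + (norm x)\<^sup>2 * gauss2 x))"
    proof (rule AE_I2)
      fix x
      have "0 \<le> phiw \<rho> x * gauss2 x"
        by (intro mult_nonneg_nonneg phiw_nonneg[OF assms] gauss2_nonneg)
      moreover have "phiw \<rho> x * gauss2 x \<le> c * (1 + (norm x)\<^sup>2) * gauss2 x"
        unfolding c_def by (rule mult_right_mono[OF phiw_le[OF assms] gauss2_nonneg])
      moreover have "c * (1 + (norm x)\<^sup>2) * gauss2 x = c * (gauss2 x + (norm x)\<^sup>2 * gauss2 x)"
        by (simp add: algebra_simps)
      ultimately show "norm (phiw \<rho> x * gauss2 x) \<le> norm (c * (gauss2 x + (norm x)\<^sup>2 * gauss2 x))"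
        by simp
    qed
  qed measurable
qed

lemma integral_phiw_gauss2_ge:
  assumes "0 < \<rho>" "\<rho> < 1/10"
  shows "3/5 * \<rho> \<le> (LINT x|lborel. phiw \<rho> x * gauss2 x)"
proof -
  define q where "q = 1 - \<rho>\<^sup>2"
  define c where "c = \<rho> / q"
  define a where "a = (11/10 * \<rho>)\<^sup>2 / q"
  define b where "b = 11/10 * \<rho> / q"
  have "\<rho> * \<rho> < 1/10 * (1/10)" using assms by (intro mult_strict_mono) auto
  then have sq: "\<rho>\<^sup>2 < 1/100" by (simp add: power2_eq_square)
  then have q: "99/100 < q" "q \<le> 1" by (simp_all add: q_def)
  have "(11/10 * \<rho>)\<^sup>2 = 121/100 * \<rho>\<^sup>2" by (simp add: power2_eq_square)
  then have "(11/10 * \<rho>)\<^sup>2 \<le> q / 80" using sq q by linarith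
  then have "a \<le> 1/80" using q by (simp add: a_def pos_divide_le_eq)
  moreover have "11/10 * \<rho> \<le> q / 9" using assms q by simp
  then have "b \<le> 1/9" using q by (simp add: b_def pos_divide_le_eq)
  ultimately have "3/5 \<le> 1 - 5*a - 2*b" by linarith
  moreover have "\<rho> \<le> c" using assms q by (simp add: c_def pos_le_divide_eq mult_left_le)
  ultimately have bound: "\<rho> * (3/5) \<le> c * (1 - 5*a - 2*b)"
    using assms by (intro mult_mono) auto
  define L where "L x = c * ((3/4 - a/2 - b) * ((norm x)\<^sup>2 * gauss2 x) - (1/16 + a/2) * (((norm x)\<^sup>2)\<^sup>2 * gauss2 x))"
    for x :: "real^2"
  have "has_bochner_integral lborel L (c * ((3/4 - a/2 - b) * 2 - (1/16 + a/2) * 8))"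
    unfolding L_def
    by (intro has_bochner_integral_mult_right has_bochner_integral_diff
        has_bochner_integral_gauss2_norm_sq has_bochner_integral_gauss2_norm_pow4)
  then have L: "integrable lborel L" "(LINT x|lborel. L x) = c * (1 - 5*a - 2*b)"
    by (simp_all add: has_bochner_integral_iff algebra_simps)
  have "(LINT x|lborel. L x) \<le> (LINT x|lborel. phiw \<rho> x * gauss2 x)"
  proof (rule integral_mono[OF L(1) integrable_phiw_gauss2])
    fix x
    have "c * ((3/4 - a/2 - b) * (norm x)\<^sup>2 - (1/16 + a/2) * ((norm x)\<^sup>2)\<^sup>2) * gauss2 x
        \<le> phiw \<rho> x * gauss2 x"
      using assms gauss2_nonneg unfolding a_def b_def c_def q_def
      by (intro mult_right_mono phiw_lower_bound) auto
    then show "L x \<le> phiw \<rho> x * gauss2 x" by (simp add: L_def algebra_simps)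
  qed (use assms in auto)
  with L(2) bound show ?thesis by linarith
qed

lemma integral_phiw_norm_sq_ge:
  assumes "0 < \<rho>" "\<rho> < 1/10"
    and [measurable]: "h \<in> borel_measurable lborel" and h: "\<forall>x. h x \<in> Delta3"
  shows "1/5 * \<rho> \<le> (LINT x|lborel. phiw \<rho> x * (norm (h x) * norm (h x)) * gauss2 x)"
proof -
  have \<rho>: "0 \<le> \<rho>" "\<rho> < 1" using assms by auto
  have nn: "0 \<le> phiw \<rho> x * gauss2 x" for x
    by (intro mult_nonneg_nonneg phiw_nonneg[OF \<rho>] gauss2_nonneg)
  have N: "1/3 \<le> norm (h x) * norm (h x)" "norm (h x) * norm (h x) \<le> 1" for x
    using norm_sq_Delta3_bounds h by blast+
  have eq: "phiw \<rho> x * (norm (h x) * norm (h x)) * gauss2 x =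
      (norm (h x) * norm (h x)) * (phiw \<rho> x * gauss2 x)" for x
    by (simp add: mult_ac)
  have "(LINT x|lborel. (1/3) * (phiw \<rho> x * gauss2 x)) \<le>
      (LINT x|lborel. phiw \<rho> x * (norm (h x) * norm (h x)) * gauss2 x)"
  proof (rule integral_mono)
    show "integrable lborel (\<lambda>x. (1/3) * (phiw \<rho> x * gauss2 x))"
      using integrable_phiw_gauss2[OF \<rho>] by simp
    show "integrable lborel (\<lambda>x. phiw \<rho> x * (norm (h x) * norm (h x)) * gauss2 x)"
    proof (rule Bochner_Integration.integrable_bound[OF integrable_phiw_gauss2[OF \<rho>]])
      show "AE x in lborel. norm (phiw \<rho> x * (norm (h x) * norm (h x)) * gauss2 x) \<le>
          norm (phiw \<rho> x * gauss2 x)"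
      proof (rule AE_I2)
        fix x
        show "norm (phiw \<rho> x * (norm (h x) * norm (h x)) * gauss2 x) \<le> norm (phiw \<rho> x * gauss2 x)"
          unfolding eq using nn[of x] N(2)[of x] by (simp add: abs_mult mult_left_le_one_le)
      qed
    qed measurable
    show "(1/3) * (phiw \<rho> x * gauss2 x) \<le> phiw \<rho> x * (norm (h x) * norm (h x)) * gauss2 x" for x
      unfolding eq using N(1) nn by (rule mult_right_mono)
  qed
  moreover have "1/5 * \<rho> \<le> (LINT x|lborel. (1/3) * (phiw \<rho> x * gauss2 x))"
    using integral_phiw_gauss2_ge[OF assms(1,2)] by simp
  ultimately show ?thesis by linarith
qed

lemma abs_inner_le_half_sum: "\<bar>a \<bullet> b\<bar> \<le> (a \<bullet> a + b \<bullet> b) / 2"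
  for a b :: "'a::real_inner"
proof -
  have "0 \<le> (a - b) \<bullet> (a - b)" "0 \<le> (a + b) \<bullet> (a + b)" by simp_all
  then show ?thesis
    by (simp add: abs_le_iff field_simps inner_diff_left inner_diff_right inner_add_left
        inner_add_right inner_commute[of b a])
qed

lemma sum_levels_le:
  fixes a :: "nat \<times> nat \<Rightarrow> real"
  assumes "\<And>k. 0 \<le> a k" and B: "\<And>K. finite K \<Longrightarrow> sum a K \<le> B" and "0 \<le> \<rho>" "\<rho> \<le> 1"
  shows "(\<Sum>n<N. \<rho>^(n+2) * sum a {k. fst k + snd k = n+2}) \<le> \<rho>\<^sup>2 * B"
proof -
  define S where "S d = {k::nat \<times> nat. fst k + snd k = d}" for d
  have fin: "finite (S d)" for d
    by (rule finite_subset[of _ "{..d} \<times> {..d}"]) (auto simp: S_def)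
  have "(\<Sum>n<N. \<rho>^(n+2) * sum a (S (n+2))) \<le> (\<Sum>n<N. \<rho>\<^sup>2 * sum a (S (n+2)))"
    using assms by (intro sum_mono mult_right_mono power_decreasing sum_nonneg) auto
  also have "\<dots> = \<rho>\<^sup>2 * (\<Sum>n<N. sum a (S (n+2)))"
    by (simp add: sum_distrib_left)
  also have "\<dots> = \<rho>\<^sup>2 * sum a (\<Union>n<N. S (n+2))"
  proof -
    have "(\<Sum>n<N. sum a (S (n+2))) = sum a (\<Union>n<N. S (n+2))"
      by (rule sum.UNION_disjoint[symmetric]) (auto simp: fin, auto simp: S_def)
    then show ?thesis by simp
  qed
  also have "\<dots> \<le> \<rho>\<^sup>2 * B"
    using assms fin by (intro mult_left_mono B) auto
  finally show ?thesis by (simp add: S_def)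
qed

lemma level_terms_summable_le:
  assumes "0 \<le> \<rho>" "\<rho> \<le> 1"
    and "f \<in> borel_measurable lborel" "g \<in> borel_measurable lborel"
    and "\<forall>x. f x \<in> Delta3" "\<forall>x. g x \<in> Delta3"
  shows "summable (\<lambda>n. level_term \<rho> f g (n + 2)) \<and> (\<Sum>n. level_term \<rho> f g (n + 2)) \<le> \<rho>\<^sup>2"
proof -
  define a where "a k = (hcoef k f \<bullet> hcoef k f + hcoef k g \<bullet> hcoef k g) / 2" for k
  have "sum a K \<le> 1" if "finite K" for K
    using sum_hcoef_inner_self_le_1[OF assms(3,5) that] sum_hcoef_inner_self_le_1[OF assms(4,6) that]
    by (simp add: a_def sum.distrib sum_divide_distrib[symmetric])
  then have levels: "(\<Sum>n<N. \<rho>^(n+2) * sum a {k. fst k + snd k = n+2}) \<le> \<rho>\<^sup>2 * 1" for N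
    using assms by (intro sum_levels_le) (auto simp: a_def)
  have level: "level_term \<rho> f g d \<le> \<rho>^d * sum a {k. fst k + snd k = d}" for d
    unfolding level_term_def a_def using assms
    by (intro mult_left_mono sum_mono abs_inner_le_half_sum) auto
  have partial: "(\<Sum>n<N. level_term \<rho> f g (n + 2)) \<le> \<rho>\<^sup>2" for N
  proof -
    have "(\<Sum>n<N. level_term \<rho> f g (n + 2)) \<le> (\<Sum>n<N. \<rho>^(n+2) * sum a {k. fst k + snd k = n+2})"
      by (intro sum_mono level)
    also have "\<dots> \<le> \<rho>\<^sup>2" using levels by simp
    finally show ?thesis .
  qed
  have "0 \<le> level_term \<rho> f g d" for d
    unfolding level_term_def using assms by simp
  then have "summable (\<lambda>n. level_term \<rho> f g (n + 2))"
    by (rule summableI_nonneg_bounded[OF _ partial])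
  then show ?thesis using suminf_le_const partial by blast
qed

theorem lemma5p2:
  fixes \<rho> :: real and f g :: "real^2 \<Rightarrow> real^3"
  assumes "0 < \<rho>" "\<rho> < 1/10"
    and "f \<in> borel_measurable lborel" "g \<in> borel_measurable lborel"
    and "\<forall>x. f x \<in> Delta3" "\<forall>x. g x \<in> Delta3"
  shows "summable (\<lambda>n. level_term \<rho> f g (n + 2)) \<and>
         (\<Sum>n. level_term \<rho> f g (n + 2)) \<le>
         (5 * \<rho> + 8 * \<rho> * \<rho>) * (1/2) *
           ((LINT x|lborel. phiw \<rho> x * (norm (f x) * norm (f x)) * gauss2 x) +
            (LINT x|lborel. phiw \<rho> x * (norm (g x) * norm (g x)) * gauss2 x))"
proof -
  let ?A = "\<lambda>h. LINT x|lborel. phiw \<rho> x * (norm (h x) * norm (h x)) * gauss2 x"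
  have levels: "summable (\<lambda>n. level_term \<rho> f g (n + 2)) \<and> (\<Sum>n. level_term \<rho> f g (n + 2)) \<le> \<rho>\<^sup>2"
    using assms by (intro level_terms_summable_le) auto
  have "2/5 * \<rho> \<le> ?A f + ?A g"
    using integral_phiw_norm_sq_ge[OF assms(1,2,3,5)] integral_phiw_norm_sq_ge[OF assms(1,2,4,6)]
    by linarith
  then have "(5 * \<rho>) * (1/2) * (2/5 * \<rho>) \<le> (5 * \<rho> + 8 * \<rho> * \<rho>) * (1/2) * (?A f + ?A g)"
    using assms(1) by (intro mult_mono) auto
  moreover have "\<rho>\<^sup>2 = (5 * \<rho>) * (1/2) * (2/5 * \<rho>)" by (simp add: power2_eq_square)
  ultimately show ?thesis using levels by linarith
qed

end
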